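(* Let $C$ be a bounded subset of a Banach space and let $\mathcal S$ be a semigroup (under composition) of self-mappings of $C$ generated by a family of firmly nonexpansive mappings $C\to C$. Suppose $\mathcal S$ is subsurjective, i.e. there is a nonempty set $D\subset C$ with $T(D)=D$ for every $T\in\mathcal S$. Then $\mathcal S$ has a common fixed point in $C$.
   Context: A mapping $T:C\to C$ is firmly nonexpansive if $\|Tx-Ty\|\le \|\alpha(x-y)+(1-\alpha)(Tx-Ty)\|$ for all $x,y\in C$ and all $\alpha\in(0,1)$. *)

theory Defs
  imports "HOL-Analysis.Analysis"
begin

definition firmly_nonexpansive_on :: "'a::real_normed_vector set \<Rightarrow> ('a \<Rightarrow> 'a) \<Rightarrow> bool" where
  "firmly_nonexpansive_on C T \<longleftrightarrow>
     (\<forall>x\<in>C. \<forall>y\<in>C. \<forall>\<alpha>::real. 0 < \<alpha> \<and> \<alpha> < 1 \<longrightarrow>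
        norm (T x - T y) \<le> norm (\<alpha> *\<^sub>R (x - y) + (1 - \<alpha>) *\<^sub>R (T x - T y)))"

inductive_set gen_semigroup :: "('a \<Rightarrow> 'a) set \<Rightarrow> ('a \<Rightarrow> 'a) set" for F where
  gen: "T \<in> F \<Longrightarrow> T \<in> gen_semigroup F"
| comp: "T \<in> gen_semigroup F \<Longrightarrow> U \<in> gen_semigroup F \<Longrightarrow> T \<circ> U \<in> gen_semigroup F"

end

theory Submission
  imports Defs
begin

text \<open>It suffices that each generator T fixes every point of D. Since T maps D onto D it
has a right inverse g on D, and the displacements M k = Sup {norm ((g ^^ k) y - y) | y \<in> D}
are bounded because D is. Firm nonexpansiveness with \<alpha> = 1/2, applied to T at (g ^^ (k+2)) y
and g y, makes (M k) discretely convex; with M 0 = 0 this forces M k \<ge> k M 1, so boundedness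
gives M 1 = 0, i.e. g, and hence T, is the identity on D.\<close>

lemma firmly_nonexpansive_onD_half:
  assumes "firmly_nonexpansive_on C T" "x \<in> C" "y \<in> C"
  shows "2 * norm (T x - T y) \<le> norm ((x - y) + (T x - T y))"
proof -
  have "\<forall>\<alpha>::real. 0 < \<alpha> \<and> \<alpha> < 1 \<longrightarrow>
      norm (T x - T y) \<le> norm (\<alpha> *\<^sub>R (x - y) + (1 - \<alpha>) *\<^sub>R (T x - T y))"
    using assms unfolding firmly_nonexpansive_on_def by blast
  then have "norm (T x - T y) \<le> norm ((1/2::real) *\<^sub>R (x - y) + (1 - 1/2) *\<^sub>R (T x - T y))"
    by (drule_tac x = "1/2" in spec) simp
  also have "\<dots> = norm ((x - y) + (T x - T y)) / 2"
    by (simp add: scaleR_add_right[symmetric])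
  finally show ?thesis by simp
qed

lemma convex_seq_bounded_first_step_nonpos:
  fixes M :: "nat \<Rightarrow> real"
  assumes "M 0 = 0" and convex: "\<And>k. 2 * M (Suc k) \<le> M k + M (Suc (Suc k))"
    and bounded: "\<And>k. M k \<le> B"
  shows "M 1 \<le> 0"
proof -
  have slope: "M (Suc k) - M k \<ge> M 1" for k
  proof (induction k)
    case 0
    show ?case using \<open>M 0 = 0\<close> by simp
  next
    case (Suc k)
    show ?case using Suc convex[of k] by linarith
  qed
  have growth: "M k \<ge> real k * M 1" for k
  proof (induction k)
    case 0
    show ?case using \<open>M 0 = 0\<close> by simp
  next
    case (Suc k)
    show ?case using Suc slope[of k] by (simp add: algebra_simps)
  qed
  show ?thesis
  proof (rule ccontr)
    assume "\<not> M 1 \<le> 0"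
    then obtain n :: nat where "real n > B / M 1"
      using reals_Archimedean2 by blast
    then have "real n * M 1 > B" using \<open>\<not> M 1 \<le> 0\<close> by (simp add: field_simps)
    then show False using growth[of n] bounded[of n] by linarith
  qed
qed

lemma funpow_in:
  assumes "\<And>y. y \<in> D \<Longrightarrow> g y \<in> D" and "y \<in> D"
  shows "(g ^^ n) y \<in> D"
  by (induction n) (use assms in auto)

lemma firmly_nonexpansive_on_right_inverse_iterates:
  assumes fne: "firmly_nonexpansive_on C T" and "D \<subseteq> C"
    and g: "\<And>y. y \<in> D \<Longrightarrow> g y \<in> D \<and> T (g y) = y" and "y \<in> D"
  shows "2 * norm ((g ^^ Suc k) y - y)
           \<le> norm ((g ^^ Suc (Suc k)) y - y) + norm ((g ^^ k) (g y) - g y)"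
proof -
  have gD: "(g ^^ n) y \<in> D" for n
    using g \<open>y \<in> D\<close> by (blast intro: funpow_in)
  define x where "x = (g ^^ Suc (Suc k)) y"
  have "x \<in> C" "g y \<in> C" using gD g \<open>y \<in> D\<close> \<open>D \<subseteq> C\<close> unfolding x_def by blast+
  have Tx: "T x = (g ^^ Suc k) y" using g gD unfolding x_def by simp
  have shift: "(g ^^ k) (g y) = (g ^^ Suc k) y" by (simp add: funpow_swap1)
  have "2 * norm ((g ^^ Suc k) y - y) = 2 * norm (T x - T (g y))"
    using Tx g \<open>y \<in> D\<close> by simp
  also have "\<dots> \<le> norm ((x - g y) + (T x - T (g y)))"
    using firmly_nonexpansive_onD_half[OF fne \<open>x \<in> C\<close> \<open>g y \<in> C\<close>] .
  also have "(x - g y) + (T x - T (g y)) = (x - y) + ((g ^^ k) (g y) - g y)"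
    using Tx g \<open>y \<in> D\<close> shift by (simp add: algebra_simps)
  also have "norm \<dots> \<le> norm (x - y) + norm ((g ^^ k) (g y) - g y)"
    by (rule norm_triangle_ineq)
  finally show ?thesis unfolding x_def .
qed

lemma firmly_nonexpansive_on_right_inverse_eq_id:
  assumes fne: "firmly_nonexpansive_on C T" and "bounded D" "D \<subseteq> C"
    and g: "\<And>y. y \<in> D \<Longrightarrow> g y \<in> D \<and> T (g y) = y" and "z \<in> D"
  shows "g z = z"
proof -
  have gD: "(g ^^ n) y \<in> D" if "y \<in> D" for n y
    using g that by (blast intro: funpow_in)
  obtain B where B: "\<And>x. x \<in> D \<Longrightarrow> norm x \<le> B"
    using \<open>bounded D\<close> bounded_iff by blast
  define disp where "disp k y = norm ((g ^^ k) y - y)" for k y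
  define M where "M k = Sup (disp k ` D)" for k
  have disp_le: "disp k y \<le> 2 * B" if "y \<in> D" for k y
    using B[OF gD[OF that, of k]] B[OF that] norm_triangle_ineq4[of "(g ^^ k) y" y]
    unfolding disp_def by linarith
  have disp_le_M: "disp k y \<le> M k" if "y \<in> D" for k y
    unfolding M_def using that disp_le by (intro cSup_upper bdd_aboveI2) auto
  have M_le: "M k \<le> 2 * B" for k
    unfolding M_def using \<open>z \<in> D\<close> disp_le by (intro cSup_least) auto
  have "M 0 = 0"
    using \<open>z \<in> D\<close> unfolding M_def disp_def by (simp add: image_constant)
  moreover have "2 * M (Suc k) \<le> M k + M (Suc (Suc k))" for k
  proof -
    have "disp (Suc k) y \<le> (M k + M (Suc (Suc k))) / 2" if "y \<in> D" for y
      using firmly_nonexpansive_on_right_inverse_iterates[OF fne \<open>D \<subseteq> C\<close> g that, of k]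
        disp_le_M[OF that, of "Suc (Suc k)"] disp_le_M[of "g y" k] g[OF that]
      unfolding disp_def by simp
    then have "M (Suc k) \<le> (M k + M (Suc (Suc k))) / 2"
      unfolding M_def[of "Suc k"] using \<open>z \<in> D\<close> by (intro cSup_least) auto
    then show ?thesis by simp
  qed
  ultimately have "M 1 \<le> 0"
    using M_le by (rule convex_seq_bounded_first_step_nonpos)
  moreover have "norm (g z - z) \<le> M 1"
    using disp_le_M[OF \<open>z \<in> D\<close>, of 1] unfolding disp_def by simp
  ultimately have "norm (g z - z) \<le> 0" by linarith
  then show "g z = z" by simp
qed

lemma firmly_nonexpansive_on_fixes_bounded_invariant:
  assumes "firmly_nonexpansive_on C T" "bounded D" "D \<subseteq> C" "T ` D = D" "z \<in> D"
  shows "T z = z"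
proof -
  have g: "inv_into D T y \<in> D \<and> T (inv_into D T y) = y" if "y \<in> D" for y
    using that \<open>T ` D = D\<close> by (metis inv_into_into f_inv_into_f)
  have "inv_into D T z = z"
    using firmly_nonexpansive_on_right_inverse_eq_id[OF assms(1-3) g \<open>z \<in> D\<close>] .
  then show ?thesis using g[OF \<open>z \<in> D\<close>] by simp
qed

lemma gen_semigroup_fixes:
  assumes "\<forall>T\<in>F. \<forall>z\<in>D. T z = z" and "T \<in> gen_semigroup F"
  shows "\<forall>z\<in>D. T z = z"
  using assms(2) by induction (use assms(1) in auto)

theorem corollary3p11:
  fixes C :: "'a::banach set" and F :: "('a \<Rightarrow> 'a) set"
  assumes "bounded C"
    and "\<forall>T\<in>F. T ` C \<subseteq> C \<and> firmly_nonexpansive_on C T"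
    and "\<exists>D. D \<noteq> {} \<and> D \<subseteq> C \<and> (\<forall>T\<in>gen_semigroup F. T ` D = D)"
  shows "\<exists>x\<in>C. \<forall>T\<in>gen_semigroup F. T x = x"
proof -
  obtain D where D: "D \<noteq> {}" "D \<subseteq> C" "\<forall>T\<in>gen_semigroup F. T ` D = D"
    using assms(3) by blast
  obtain z where "z \<in> D" using D(1) by blast
  have "bounded D" by (rule bounded_subset[OF assms(1) D(2)])
  have "\<forall>T\<in>F. \<forall>y\<in>D. T y = y"
  proof (intro ballI)
    fix T y assume "T \<in> F" "y \<in> D"
    show "T y = y"
    proof (rule firmly_nonexpansive_on_fixes_bounded_invariant[OF _ \<open>bounded D\<close> D(2)])
      show "firmly_nonexpansive_on C T" using assms(2) \<open>T \<in> F\<close> by blast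
      show "T ` D = D" using D(3) gen_semigroup.gen[OF \<open>T \<in> F\<close>] by blast
    qed (fact \<open>y \<in> D\<close>)
  qed
  then have "\<forall>T\<in>gen_semigroup F. T z = z"
    using gen_semigroup_fixes \<open>z \<in> D\<close> by blast
  then show ?thesis using \<open>z \<in> D\<close> D(2) by blast
qed

end
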